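(* Let $P$ be an ergodic transition matrix on a finite set $\mathcal{X}$ with minimum stationary probability $\pi_\star$ and pseudo-spectral gap $\gamma_{\mathsf{ps}}$. If $p$ is a positive integer with $p<1/\gamma_{\mathsf{ps}}$, then $$\gamma_{\mathsf{ps}}(P^p)>\frac{p\,\gamma_{\mathsf{ps}}}{2\log(4e/\pi_\star)+2}.$$
   Context: $P$ is row-stochastic on finite $\mathcal{X}$, ergodic (primitive), with unique stationary distribution $\pi>0$, $\pi_\star=\min_x\pi(x)$, and time reversal $P^\star(x,x')=\pi(x')P(x',x)/\pi(x)$. For a transition matrix $Q$ with stationary distribution $\pi$, $\gamma_\dagger(Q)\doteq 1-\lambda_2(Q^\star Q)$, where $1=\lambda_1\ge\lambda_2\ge\dots\ge 0$ are the eigenvalues of $Q^\star Q$ counted with multiplicity. The pseudo-spectral gap is $\gamma_{\mathsf{ps}}(Q)=\max_{k\ge1}\gamma_\dagger(Q^k)/k$ and $\gamma_{\mathsf{ps}}=\gamma_{\mathsf{ps}}(P)$. $\log$ is the natural logarithm. *)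

theory Defs
  imports "HOL-Analysis.Analysis" "HOL-Computational_Algebra.Polynomial" "HOL-Library.Multiset"
begin

type_synonym 'n sqmat = "real ^ 'n ^ 'n"

primrec matpow :: "'n::finite sqmat \<Rightarrow> nat \<Rightarrow> 'n sqmat" where
  "matpow A 0 = mat 1"
| "matpow A (Suc k) = A ** matpow A k"

definition row_stochastic :: "'n::finite sqmat \<Rightarrow> bool" where
  "row_stochastic P \<longleftrightarrow> (\<forall>i j. P $ i $ j \<ge> 0) \<and> (\<forall>i. (\<Sum>j\<in>UNIV. P $ i $ j) = 1)"

text \<open>Ergodic = primitive: some power has all entries strictly positive.\<close>
definition primitive :: "'n::finite sqmat \<Rightarrow> bool" where
  "primitive P \<longleftrightarrow> (\<exists>k. \<forall>i j. matpow P k $ i $ j > 0)"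

definition stationary :: "'n::finite sqmat \<Rightarrow> ('n \<Rightarrow> real) \<Rightarrow> bool" where
  "stationary P mu \<longleftrightarrow> (\<forall>x. mu x \<ge> 0) \<and> (\<Sum>x\<in>UNIV. mu x) = 1 \<and>
     (\<forall>y. (\<Sum>x\<in>UNIV. mu x * P $ x $ y) = mu y)"

definition time_rev :: "('n::finite \<Rightarrow> real) \<Rightarrow> 'n sqmat \<Rightarrow> 'n sqmat" where
  "time_rev mu Q = (\<chi> x x'. mu x' * Q $ x' $ x / mu x)"

definition charpoly :: "'n::finite sqmat \<Rightarrow> real poly" where
  "charpoly A = det (\<chi> i j. (if i = j then [:0, 1:] else 0) - [:A $ i $ j:])"

definition eigs_desc :: "'n::finite sqmat \<Rightarrow> real list" where
  "eigs_desc A = rev (sorted_list_of_multiset (proots (charpoly A)))"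

text \<open>Second largest eigenvalue counted with multiplicity; padded with 0
  (the convention lambda_i \<ge> 0) when the state space is a singleton.\<close>
definition lambda2 :: "'n::finite sqmat \<Rightarrow> real" where
  "lambda2 A = (eigs_desc A @ [0]) ! 1"

definition gamma_dag :: "('n::finite \<Rightarrow> real) \<Rightarrow> 'n sqmat \<Rightarrow> real" where
  "gamma_dag mu Q = 1 - lambda2 (time_rev mu Q ** Q)"

definition gamma_ps :: "('n::finite \<Rightarrow> real) \<Rightarrow> 'n sqmat \<Rightarrow> real" where
  "gamma_ps mu Q = (SUP k\<in>{1::nat..}. gamma_dag mu (matpow Q k) / real k)"

definition pi_star :: "('n::finite \<Rightarrow> real) \<Rightarrow> real" where
  "pi_star mu = Min (range mu)"

end

theory Submission
  imports Defs
begin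

text \<open>On L2(mu) the operator Q* Q is self-adjoint and positive semidefinite, with the constants as
  eigenvectors of eigenvalue 1. By the spectral theorem, 1 - gamma_dag(Q) is therefore the least c
  with |Q f|^2 <= c |f|^2 for all mean-zero f. This constant is submultiplicative, which gives
  1 - gamma_dag(P^n) <= (1 - gamma_dag(P^k))^(n div k).
  Choose k with a / k > gamma_ps / 2, where a = gamma_dag(P^k). If p < k, let j = k div p + 1,
  so that k <= p j <= 2 k; then gamma_dag(P^(p j)) >= a, so gamma_ps(P^p) >= a / j >= p a / (2 k).
  If p >= k, let m = p div k; since m a <= p gamma_ps < 1, the Bonferroni inequality gives
  gamma_ps(P^p) >= gamma_dag(P^p) >= 1 - (1 - a)^m >= (m + 1) a / 2 >= p a / (2 k).
  Either way gamma_ps(P^p) > p gamma_ps / 4, and 2 log(4 e / pi_star) + 2 >= 4.\<close>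

section \<open>Spectral theorem for symmetric matrices\<close>

lemma symmetric_inner_swap:
  fixes S :: "real^'n^'n"
  assumes "transpose S = S"
  shows "x \<bullet> (S *v y) = (S *v x) \<bullet> y"
  by (metis assms dot_lmul_matrix inner_commute transpose_matrix_vector)

lemma linear_coeff_zero_if_quadratic_nonpos:
  fixes a b :: real
  assumes "\<And>t. 2 * t * a + t\<^sup>2 * b \<le> 0"
  shows "a = 0"
proof (rule ccontr)
  assume "a \<noteq> 0"
  define B where "B = \<bar>b\<bar> + 1"
  have pos: "B > 0" "2 * B + b > 0" unfolding B_def by (auto simp: abs_if)
  have "2 * (a / B) * a + (a / B)\<^sup>2 * b = a\<^sup>2 * (2 * B + b) / B\<^sup>2"
    using pos by (simp add: field_simps power2_eq_square)
  moreover have "a\<^sup>2 * (2 * B + b) / B\<^sup>2 > 0"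
    using \<open>a \<noteq> 0\<close> pos by (intro divide_pos_pos mult_pos_pos) auto
  ultimately show False using assms[of "a / B"] by linarith
qed

lemma symmetric_invariant_subspace_eigenvector:
  fixes S :: "real^'n^'n"
  assumes sym: "transpose S = S" and V: "subspace V" "V \<noteq> {0}"
    and inv: "\<And>x. x \<in> V \<Longrightarrow> S *v x \<in> V"
  obtains v where "v \<in> V" "norm v = 1" "S *v v = (v \<bullet> (S *v v)) *\<^sub>R v"
proof -
  define K where "K = V \<inter> sphere 0 1"
  obtain x0 where x0: "x0 \<in> V" "x0 \<noteq> 0" using V subspace_0 by blast
  have "x0 /\<^sub>R norm x0 \<in> K" unfolding K_def using x0 V by (auto simp: subspace_scale)
  moreover have "compact K" unfolding K_def
    using V by (intro closed_Int_compact closed_subspace compact_sphere)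
  moreover have "continuous_on K (\<lambda>x. x \<bullet> (S *v x))"
    by (intro continuous_intros linear_continuous_on matrix_vector_mul_bounded_linear)
  ultimately obtain v where vK: "v \<in> K" and vmax: "\<And>y. y \<in> K \<Longrightarrow> y \<bullet> (S *v y) \<le> v \<bullet> (S *v v)"
    using continuous_attains_sup by (metis empty_iff)
  define l where "l = v \<bullet> (S *v v)"
  have vV: "v \<in> V" and nv: "norm v = 1" using vK unfolding K_def by auto
  have vv: "v \<bullet> v = 1" using nv by (simp add: dot_square_norm)
  have rayleigh: "x \<bullet> (S *v x) \<le> l * (x \<bullet> x)" if "x \<in> V" for x
  proof (cases "x = 0")
    case False
    have "x /\<^sub>R norm x \<in> K" unfolding K_def using that False V by (auto simp: subspace_scale)
    from vmax[OF this] have "(x \<bullet> (S *v x)) / (norm x)\<^sup>2 \<le> l"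
      unfolding l_def by (simp add: matrix_vector_mult_scaleR power2_eq_square divide_inverse mult_ac)
    then show ?thesis using False by (simp add: field_simps dot_square_norm)
  qed simp
  \<comment> \<open>first-order condition at the maximiser along every direction orthogonal to v\<close>
  have orth: "w \<bullet> (S *v v) = 0" if "w \<in> V" "w \<bullet> v = 0" for w
  proof (rule linear_coeff_zero_if_quadratic_nonpos[where b = "w \<bullet> (S *v w) - l * (w \<bullet> w)"])
    fix t :: real
    have "v + t *\<^sub>R w \<in> V" using that vV V by (simp add: subspace_add subspace_scale)
    then have "(v + t *\<^sub>R w) \<bullet> (S *v (v + t *\<^sub>R w)) \<le> l * ((v + t *\<^sub>R w) \<bullet> (v + t *\<^sub>R w))"
      by (rule rayleigh)
    moreover have "v \<bullet> (S *v w) = w \<bullet> (S *v v)"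
      using symmetric_inner_swap[OF sym, of v w] by (simp add: inner_commute)
    ultimately show "2 * t * (w \<bullet> (S *v v)) + t\<^sup>2 * (w \<bullet> (S *v w) - l * (w \<bullet> w)) \<le> 0"
      using that(2) vv
      by (simp add: matrix_vector_right_distrib matrix_vector_mult_scaleR inner_add_left
          inner_add_right l_def algebra_simps power2_eq_square inner_commute[of v w])
  qed
  define u where "u = S *v v - l *\<^sub>R v"
  have uV: "u \<in> V" unfolding u_def using inv vV V by (simp add: subspace_diff subspace_scale)
  have uv: "u \<bullet> v = 0" unfolding u_def using vv
    by (simp add: inner_diff_left l_def inner_commute[of "S *v v" v])
  have "u \<bullet> u = u \<bullet> (S *v v) - l * (u \<bullet> v)" unfolding u_def by (simp add: inner_diff_right)
  also have "\<dots> = 0" using orth[OF uV uv] uv by simp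
  finally have "S *v v = l *\<^sub>R v" unfolding u_def by simp
  then show thesis using that vV nv l_def by blast
qed

lemma symmetric_invariant_subspace_eigenbasis:
  fixes S :: "real^'n^'n"
  assumes sym: "transpose S = S"
  shows "subspace V \<Longrightarrow> (\<And>x. x \<in> V \<Longrightarrow> S *v x \<in> V) \<Longrightarrow>
    \<exists>B. B \<subseteq> V \<and> span B = V \<and> pairwise orthogonal B \<and>
        (\<forall>b\<in>B. norm b = 1 \<and> S *v b = (b \<bullet> (S *v b)) *\<^sub>R b)"
proof (induction "dim V" arbitrary: V rule: less_induct)
  case less
  show ?case
  proof (cases "V = {0}")
    case True
    then show ?thesis by (intro exI[of _ "{}"]) auto
  next
    case False
    then obtain v where vV: "v \<in> V" and nv: "norm v = 1" and Sv: "S *v v = (v \<bullet> (S *v v)) *\<^sub>R v"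
      using symmetric_invariant_subspace_eigenvector[OF sym less.prems(1)] less.prems(2) by metis
    have vv: "v \<bullet> v = 1" using nv by (simp add: dot_square_norm)
    define V' where "V' = {x \<in> V. x \<bullet> v = 0}"
    have subV': "subspace V'" unfolding V'_def subspace_def using less.prems(1)
      by (auto simp: subspace_def inner_add_left)
    have invV': "S *v x \<in> V'" if "x \<in> V'" for x
      using that less.prems(2) symmetric_inner_swap[OF sym, of x v] Sv
      unfolding V'_def by (metis (mono_tags, lifting) inner_commute inner_scaleR_right
          mem_Collect_eq mult_zero_right)
    have "V' \<subseteq> V" "v \<notin> V'" using vv unfolding V'_def by auto
    then have "span V' \<subset> span V" using vV subV' less.prems(1) by (metis psubsetI span_eq_iff)
    then have "dim V' < dim V" by (rule dim_psubset)
    from less.hyps[OF this subV' invV'] obtain B' where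
      B': "B' \<subseteq> V'" "span B' = V'" "pairwise orthogonal B'"
          "\<forall>b\<in>B'. norm b = 1 \<and> S *v b = (b \<bullet> (S *v b)) *\<^sub>R b" by blast
    have "V \<subseteq> span (insert v B')"
    proof
      fix x assume xV: "x \<in> V"
      have "x - (x \<bullet> v) *\<^sub>R v \<in> V'"
        using xV vV less.prems(1) vv unfolding V'_def
        by (simp add: subspace_diff subspace_scale inner_diff_left)
      then have "x - (x \<bullet> v) *\<^sub>R v \<in> span (insert v B')"
        using B'(2) span_mono[of B' "insert v B'"] by auto
      then show "x \<in> span (insert v B')"
        by (metis diff_add_cancel span_add span_base span_scale insertI1)
    qed
    moreover have "span (insert v B') \<subseteq> V"
      using B'(1) vV less.prems(1) unfolding V'_def by (intro span_minimal) auto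
    moreover have "pairwise orthogonal (insert v B')"
      using B'(1,3) unfolding V'_def pairwise_insert by (auto simp: orthogonal_def inner_commute)
    ultimately show ?thesis
      using B'(1,4) nv Sv vV unfolding V'_def by (intro exI[of _ "insert v B'"]) blast
  qed
qed

definition orthonormal_eigenbasis :: "real^'n^'n \<Rightarrow> ('n::finite \<Rightarrow> real^'n) \<Rightarrow> bool" where
  "orthonormal_eigenbasis S \<phi> \<longleftrightarrow> (\<forall>i j. \<phi> i \<bullet> \<phi> j = (if i = j then 1 else 0)) \<and>
     (\<forall>j. S *v \<phi> j = (\<phi> j \<bullet> (S *v \<phi> j)) *\<^sub>R \<phi> j)"

lemma symmetric_orthonormal_eigenbasis:
  fixes S :: "real^'n^'n"
  assumes sym: "transpose S = S" and ne: "norm e = 1" and Se: "S *v e = c *\<^sub>R e"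
  obtains \<phi> j0 where "\<phi> j0 = e" "orthonormal_eigenbasis S \<phi>"
proof -
  define V where "V = {x. x \<bullet> e = 0}"
  have subV: "subspace V" unfolding V_def subspace_def by (auto simp: inner_add_left)
  have "S *v x \<in> V" if "x \<in> V" for x
    using that symmetric_inner_swap[OF sym, of x e] Se unfolding V_def by simp
  then obtain B' where B': "B' \<subseteq> V" "span B' = V" "pairwise orthogonal B'"
     "\<forall>b\<in>B'. norm b = 1 \<and> S *v b = (b \<bullet> (S *v b)) *\<^sub>R b"
    using symmetric_invariant_subspace_eigenbasis[OF sym subV] by blast
  have ee: "e \<bullet> e = 1" using ne by (simp add: dot_square_norm)
  define B where "B = insert e B'"
  have orthB: "pairwise orthogonal B" unfolding B_def pairwise_insert using B'(1,3)
    unfolding V_def by (auto simp: orthogonal_def inner_commute)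
  have unitB: "\<forall>b\<in>B. norm b = 1 \<and> S *v b = (b \<bullet> (S *v b)) *\<^sub>R b"
    unfolding B_def using B'(4) ne Se ee by (auto simp: inner_commute)
  have indB: "independent B"
    using pairwise_orthogonal_independent[OF orthB] unitB by fastforce
  have "x \<in> span B" for x
  proof -
    have "x - (x \<bullet> e) *\<^sub>R e \<in> V" unfolding V_def using ee by (simp add: inner_diff_left)
    then have "x - (x \<bullet> e) *\<^sub>R e \<in> span B"
      using B'(2) span_mono[of B' B] unfolding B_def by auto
    then show ?thesis unfolding B_def
      by (metis diff_add_cancel span_add span_base span_scale insertI1)
  qed
  then have "span B = UNIV" by auto
  then have "card B = CARD('n)"
    using dim_eq_card_independent[OF indB] dim_span[of B] by simp
  then obtain \<phi> where \<phi>: "bij_betw \<phi> (UNIV :: 'n set) B"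
    using finite_same_card_bij[of "UNIV :: 'n set" B] finiteI_independent[OF indB] by auto
  define j0 where "j0 = inv_into UNIV \<phi> e"
  show thesis
  proof (rule that)
    show "\<phi> j0 = e" unfolding j0_def using \<phi> by (simp add: B_def bij_betw_inv_into_right)
    have "\<phi> i \<bullet> \<phi> j = (if i = j then 1 else 0)" for i j
      using \<phi> orthB unitB unfolding bij_betw_def inj_on_def pairwise_def orthogonal_def
      by (auto simp: dot_square_norm) metis
    moreover have "S *v \<phi> j = (\<phi> j \<bullet> (S *v \<phi> j)) *\<^sub>R \<phi> j" for j
      using \<phi> unitB bij_betwE by blast
    ultimately show "orthonormal_eigenbasis S \<phi>" unfolding orthonormal_eigenbasis_def by blast
  qed
qed

section \<open>Characteristic polynomials\<close>

definition diag_matrix :: "('n::finite \<Rightarrow> real) \<Rightarrow> real^'n^'n" where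
  "diag_matrix d = (\<chi> i j. if i = j then d i else 0)"

lemma diag_matrix_mult_left: "(diag_matrix d ** A) $ x $ z = d x * A $ x $ z"
proof -
  have "(\<Sum>k\<in>UNIV. (if x = k then d x else 0) * A $ k $ z) = (\<Sum>k\<in>UNIV. if x = k then d x * A $ k $ z else 0)"
    by (rule sum.cong) auto
  then show ?thesis by (simp add: diag_matrix_def matrix_matrix_mult_def)
qed

lemma diag_matrix_mult_right: "(A ** diag_matrix d) $ x $ z = A $ x $ z * d z"
proof -
  have "(\<Sum>k\<in>UNIV. A $ x $ k * (if k = z then d k else 0)) = (\<Sum>k\<in>UNIV. if k = z then A $ x $ k * d z else 0)"
    by (rule sum.cong) auto
  then show ?thesis by (simp add: diag_matrix_def matrix_matrix_mult_def)
qed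

lemma diag_matrix_mult_inverse:
  assumes "\<And>x. d x \<noteq> 0"
  shows "diag_matrix d ** diag_matrix (\<lambda>x. 1 / d x) = mat 1"
proof -
  have "(diag_matrix d ** diag_matrix (\<lambda>x. 1 / d x)) $ i $ j = mat 1 $ i $ j" for i j
    unfolding diag_matrix_mult_right by (simp add: diag_matrix_def mat_def assms)
  then show ?thesis by (simp add: vec_eq_iff)
qed

definition const_poly_matrix :: "real^'n^'m \<Rightarrow> real poly^'n^'m" where
  "const_poly_matrix M = (\<chi> i j. [:M $ i $ j:])"

definition X_matrix :: "real poly^'n^'n" where
  "X_matrix = (\<chi> i j. if i = j then [:0, 1:] else 0)"

lemma charpoly_eq_det_X_matrix: "charpoly A = det (X_matrix - const_poly_matrix A)"
  unfolding charpoly_def X_matrix_def const_poly_matrix_def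
  by (rule arg_cong[where f = det]) (simp add: vec_eq_iff)

lemma const_poly_sum: "[:sum f A:] = (\<Sum>x\<in>A. [:f x:])"
proof (induction A rule: infinite_finite_induct)
  case (insert x F)
  have "[:f x + sum f F:] = [:f x:] + [:sum f F:]" by simp
  with insert show ?case by simp
qed auto

lemma const_poly_matrix_mult:
  "const_poly_matrix (A ** B) = const_poly_matrix A ** const_poly_matrix B"
  unfolding const_poly_matrix_def matrix_matrix_mult_def
  by (simp add: vec_eq_iff const_poly_sum mult.commute)

lemma const_poly_matrix_one: "const_poly_matrix (mat 1 :: real^'n^'n) = mat 1"
  unfolding const_poly_matrix_def by (simp add: vec_eq_iff mat_def)

lemma matrix_diff_ldistrib: "(A::'a::comm_ring_1^'n^'m) ** (B - C) = A ** B - A ** C"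
  by (simp add: vec_eq_iff matrix_matrix_mult_def sum_subtractf algebra_simps)

lemma matrix_diff_rdistrib: "((B::'a::comm_ring_1^'n^'m) - C) ** A = B ** A - C ** A"
  by (simp add: vec_eq_iff matrix_matrix_mult_def sum_subtractf algebra_simps)

lemma X_matrix_commute: "X_matrix ** (M :: real poly^'n^'n) = M ** X_matrix"
  unfolding X_matrix_def matrix_matrix_mult_def
  by (simp add: vec_eq_iff if_distrib if_distribR mult.commute cong: if_cong)

lemma charpoly_similar:
  fixes U V D :: "real^'n^'n"
  assumes "U ** V = mat 1"
  shows "charpoly (U ** D ** V) = charpoly D"
proof -
  let ?U = "const_poly_matrix U" and ?V = "const_poly_matrix V" and ?D = "const_poly_matrix D"
  have UV: "?U ** ?V = mat 1"
    by (simp add: const_poly_matrix_mult[symmetric] assms const_poly_matrix_one)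
  have "?U ** X_matrix ** ?V = X_matrix"
    by (metis UV X_matrix_commute matrix_mul_assoc matrix_mul_rid)
  then have "X_matrix - const_poly_matrix (U ** D ** V) = ?U ** (X_matrix - ?D) ** ?V"
    by (simp add: matrix_diff_ldistrib matrix_diff_rdistrib const_poly_matrix_mult)
  then have "charpoly (U ** D ** V) = det (?U ** ?V) * det (X_matrix - ?D)"
    by (simp add: charpoly_eq_det_X_matrix det_mul)
  then show ?thesis by (simp add: UV charpoly_eq_det_X_matrix)
qed

lemma charpoly_diag_matrix: "charpoly (diag_matrix d) = (\<Prod>i\<in>UNIV. [:- d i, 1:])"
  unfolding charpoly_eq_det_X_matrix
  by (subst det_diagonal) (auto simp: X_matrix_def const_poly_matrix_def diag_matrix_def)

section \<open>The second eigenvalue of a symmetric contraction\<close>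

lemma second_largest_add_mset_one:
  fixes M :: "real multiset"
  assumes "\<forall>x\<in>#M. 0 \<le> x \<and> x \<le> 1"
  shows "(rev (sorted_list_of_multiset (add_mset 1 M)) @ [0]) ! 1 = Max (insert 0 (set_mset M))"
proof -
  define xs where "xs = sorted_list_of_multiset M"
  have "sorted (xs @ [1])" "mset (xs @ [1]) = add_mset 1 M"
    using assms unfolding xs_def by (auto simp: sorted_append)
  then have "sorted_list_of_multiset (add_mset 1 M) = xs @ [1]"
    by (metis sorted_list_of_multiset_mset sorted_sort_id)
  then have "(rev (sorted_list_of_multiset (add_mset 1 M)) @ [0]) ! 1 = last (0 # xs)"
    by (cases xs rule: rev_cases) auto
  also have "\<dots> = Max (set (0 # xs))"
  proof (rule Max_eqI[symmetric])
    have "sorted (0 # xs)" using assms unfolding xs_def by simp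
    then have "sorted (butlast (0 # xs) @ [last (0 # xs)])"
      by (metis append_butlast_last_id list.distinct(1))
    moreover have "y \<in> set (butlast (0 # xs) @ [last (0 # xs)])" if "y \<in> set (0 # xs)" for y
      using that by (metis append_butlast_last_id list.distinct(1))
    ultimately show "y \<le> last (0 # xs)" if "y \<in> set (0 # xs)" for y
      using that by (fastforce simp: sorted_append)
  qed simp_all
  finally show ?thesis unfolding xs_def by simp
qed

lemma orthonormal_eigenbasis_diagonalizes:
  assumes "orthonormal_eigenbasis S \<phi>"
  defines "U \<equiv> \<chi> i j. \<phi> j $ i"
  shows "U ** transpose U = mat 1" "S = U ** diag_matrix (\<lambda>j. \<phi> j \<bullet> (S *v \<phi> j)) ** transpose U"
proof -
  have "transpose U ** U = mat 1"
    using assms unfolding U_def orthonormal_eigenbasis_def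
    by (simp add: vec_eq_iff matrix_matrix_mult_def transpose_def mat_def inner_vec_def)
  then show UUt: "U ** transpose U = mat 1" using matrix_left_right_inverse by blast
  have "S ** U = U ** diag_matrix (\<lambda>j. \<phi> j \<bullet> (S *v \<phi> j))"
  proof -
    have "(S ** U) $ i $ j = (S *v \<phi> j) $ i" for i j
      unfolding U_def by (simp add: matrix_matrix_mult_def matrix_vector_mult_def)
    moreover have "(U ** diag_matrix (\<lambda>j. \<phi> j \<bullet> (S *v \<phi> j))) $ i $ j
        = (\<phi> j \<bullet> (S *v \<phi> j)) * \<phi> j $ i" for i j
      unfolding U_def diag_matrix_def
      by (simp add: matrix_matrix_mult_def if_distrib if_distribR cong: if_cong)
    ultimately show ?thesis using assms unfolding orthonormal_eigenbasis_def
      by (simp add: vec_eq_iff)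
  qed
  then show "S = U ** diag_matrix (\<lambda>j. \<phi> j \<bullet> (S *v \<phi> j)) ** transpose U"
    by (metis UUt matrix_mul_assoc matrix_mul_rid)
qed

lemma charpoly_orthonormal_eigenbasis:
  assumes "orthonormal_eigenbasis S \<phi>"
  shows "charpoly S = (\<Prod>j\<in>UNIV. [:- (\<phi> j \<bullet> (S *v \<phi> j)), 1:])"
proof -
  note diag = orthonormal_eigenbasis_diagonalizes[OF assms]
  have "charpoly S = charpoly (diag_matrix (\<lambda>j. \<phi> j \<bullet> (S *v \<phi> j)))"
    by (subst diag(2)) (rule charpoly_similar[OF diag(1)])
  then show ?thesis by (simp add: charpoly_diag_matrix)
qed

lemma quadratic_form_orthonormal_eigenbasis:
  fixes S :: "real^'n::finite^'n"
  assumes "orthonormal_eigenbasis S \<phi>"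
  shows "g \<bullet> (S *v g) = (\<Sum>j\<in>UNIV. (\<phi> j \<bullet> (S *v \<phi> j)) * (\<phi> j \<bullet> g)\<^sup>2)"
    and "g \<bullet> g = (\<Sum>j\<in>UNIV. (\<phi> j \<bullet> g)\<^sup>2)"
proof -
  define U :: "real^'n^'n" where "U = (\<chi> i j. \<phi> j $ i)"
  note diag = orthonormal_eigenbasis_diagonalizes[OF assms, folded U_def]
  define h where "h = transpose U *v g"
  have h: "h $ j = \<phi> j \<bullet> g" for j
    unfolding h_def U_def by (simp add: matrix_vector_mult_def transpose_def inner_vec_def mult.commute)
  have "g \<bullet> (S *v g) = h \<bullet> (diag_matrix (\<lambda>j. \<phi> j \<bullet> (S *v \<phi> j)) *v h)"
    by (subst diag(2)) (simp add: h_def dot_lmul_matrix matrix_vector_mul_assoc[symmetric]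
        matrix_transpose_mul)
  then show "g \<bullet> (S *v g) = (\<Sum>j\<in>UNIV. (\<phi> j \<bullet> (S *v \<phi> j)) * (\<phi> j \<bullet> g)\<^sup>2)"
    by (simp add: diag_matrix_def inner_vec_def matrix_vector_mult_def if_distrib if_distribR
        power2_eq_square h algebra_simps cong: if_cong)
  have "h \<bullet> h = g \<bullet> ((U ** transpose U) *v g)"
    unfolding h_def by (simp add: dot_lmul_matrix matrix_vector_mul_assoc[symmetric])
  then show "g \<bullet> g = (\<Sum>j\<in>UNIV. (\<phi> j \<bullet> g)\<^sup>2)"
    using diag(1) by (simp add: inner_vec_def h power2_eq_square)
qed

lemma lambda2_orthonormal_eigenbasis:
  fixes S :: "real^'n::finite^'n"
  assumes basis: "orthonormal_eigenbasis S \<phi>" and top: "\<phi> j0 \<bullet> (S *v \<phi> j0) = 1"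
    and bounds: "\<And>j. 0 \<le> \<phi> j \<bullet> (S *v \<phi> j) \<and> \<phi> j \<bullet> (S *v \<phi> j) \<le> 1"
  shows "lambda2 S = Max (insert 0 ((\<lambda>j. \<phi> j \<bullet> (S *v \<phi> j)) ` (UNIV - {j0})))"
proof -
  define \<mu> where "\<mu> j = \<phi> j \<bullet> (S *v \<phi> j)" for j
  define M where "M = (\<Sum>j\<in>UNIV - {j0}. {#\<mu> j#})"
  have "proots (charpoly S) = (\<Sum>j\<in>UNIV. {#\<mu> j#})"
    unfolding charpoly_orthonormal_eigenbasis[OF basis] \<mu>_def by (subst proots_prod) auto
  also have "\<dots> = add_mset 1 M"
    unfolding M_def using top \<mu>_def by (subst sum.remove[of _ j0]) auto
  finally have "lambda2 S = (rev (sorted_list_of_multiset (add_mset 1 M)) @ [0]) ! 1"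
    unfolding lambda2_def eigs_desc_def by simp
  also have "\<dots> = Max (insert 0 (set_mset M))"
    using bounds unfolding M_def \<mu>_def by (intro second_largest_add_mset_one) (auto simp: set_mset_sum)
  also have "set_mset M = (\<lambda>j. \<phi> j \<bullet> (S *v \<phi> j)) ` (UNIV - {j0})"
    unfolding M_def \<mu>_def by (auto simp: set_mset_sum)
  finally show ?thesis .
qed

lemma lambda2_le_iff_rayleigh:
  fixes S :: "real^'n::finite^'n"
  assumes sym: "transpose S = S" and ne: "norm e = 1" and Se: "S *v e = e"
    and psd: "\<And>g. 0 \<le> g \<bullet> (S *v g)" and contr: "\<And>g. g \<bullet> (S *v g) \<le> g \<bullet> g"
  shows "lambda2 S \<le> c \<longleftrightarrow> 0 \<le> c \<and> (\<forall>g. g \<bullet> e = 0 \<longrightarrow> g \<bullet> (S *v g) \<le> c * (g \<bullet> g))"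
proof -
  obtain \<phi> j0 where e: "\<phi> j0 = e" and basis: "orthonormal_eigenbasis S \<phi>"
    using symmetric_orthonormal_eigenbasis[OF sym ne, of 1] Se by auto
  define \<mu> where "\<mu> j = \<phi> j \<bullet> (S *v \<phi> j)" for j
  have unit: "\<phi> i \<bullet> \<phi> j = (if i = j then 1 else 0)" for i j
    using basis unfolding orthonormal_eigenbasis_def by blast
  have "0 \<le> \<mu> j \<and> \<mu> j \<le> 1" for j
    using psd[of "\<phi> j"] contr[of "\<phi> j"] unit[of j j] unfolding \<mu>_def by auto
  moreover have "\<mu> j0 = 1" unfolding \<mu>_def e Se using ne by (simp add: dot_square_norm)
  ultimately have lam: "lambda2 S = Max (insert 0 (\<mu> ` (UNIV - {j0})))"
    unfolding \<mu>_def by (intro lambda2_orthonormal_eigenbasis[OF basis]) auto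
  have "(\<forall>g. g \<bullet> e = 0 \<longrightarrow> g \<bullet> (S *v g) \<le> c * (g \<bullet> g)) \<longleftrightarrow> (\<forall>j\<in>UNIV - {j0}. \<mu> j \<le> c)"
  proof
    assume bound: "\<forall>g. g \<bullet> e = 0 \<longrightarrow> g \<bullet> (S *v g) \<le> c * (g \<bullet> g)"
    show "\<forall>j\<in>UNIV - {j0}. \<mu> j \<le> c"
    proof
      fix j assume "j \<in> UNIV - {j0}"
      then have "\<phi> j \<bullet> e = 0" "\<phi> j \<bullet> \<phi> j = 1" using unit[of j j0] unit[of j j] e by auto
      then show "\<mu> j \<le> c" using bound[rule_format, of "\<phi> j"] unfolding \<mu>_def by simp
    qed
  next
    assume bound: "\<forall>j\<in>UNIV - {j0}. \<mu> j \<le> c"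
    show "\<forall>g. g \<bullet> e = 0 \<longrightarrow> g \<bullet> (S *v g) \<le> c * (g \<bullet> g)"
    proof (intro allI impI)
      fix g assume "g \<bullet> e = 0"
      then have "\<mu> j * (\<phi> j \<bullet> g)\<^sup>2 \<le> c * (\<phi> j \<bullet> g)\<^sup>2" for j
      proof (cases "j = j0")
        case True
        then show ?thesis using \<open>g \<bullet> e = 0\<close> e by (simp add: inner_commute)
      next
        case False
        then show ?thesis using bound by (simp add: mult_right_mono)
      qed
      then show "g \<bullet> (S *v g) \<le> c * (g \<bullet> g)"
        using quadratic_form_orthonormal_eigenbasis[OF basis, of g] unfolding \<mu>_def
        by (simp add: sum_distrib_left sum_mono)
    qed
  qed
  then show ?thesis unfolding lam by simp
qed

section \<open>Markov kernels on L2(mu)\<close>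

definition kernel_apply :: "real^'n^'n \<Rightarrow> ('n::finite \<Rightarrow> real) \<Rightarrow> 'n \<Rightarrow> real" where
  "kernel_apply Q f x = (\<Sum>y\<in>UNIV. Q $ x $ y * f y)"

definition weighted_sqnorm :: "('n::finite \<Rightarrow> real) \<Rightarrow> ('n \<Rightarrow> real) \<Rightarrow> real" where
  "weighted_sqnorm mu f = (\<Sum>x\<in>UNIV. mu x * (f x)\<^sup>2)"

definition centered_contraction :: "('n::finite \<Rightarrow> real) \<Rightarrow> real^'n^'n \<Rightarrow> real \<Rightarrow> bool" where
  "centered_contraction mu Q c \<longleftrightarrow> (\<forall>f. (\<Sum>x\<in>UNIV. mu x * f x) = 0 \<longrightarrow>
     weighted_sqnorm mu (kernel_apply Q f) \<le> c * weighted_sqnorm mu f)"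

lemma row_stochastic_mult:
  assumes "row_stochastic A" "row_stochastic B"
  shows "row_stochastic (A ** B)"
  unfolding row_stochastic_def
proof (intro conjI allI)
  show "(A ** B) $ i $ j \<ge> 0" for i j
    using assms unfolding row_stochastic_def matrix_matrix_mult_def by (simp add: sum_nonneg)
  have "(\<Sum>j\<in>UNIV. (A ** B) $ i $ j) = (\<Sum>k\<in>UNIV. A $ i $ k * (\<Sum>j\<in>UNIV. B $ k $ j))" for i
    unfolding matrix_matrix_mult_def by (simp add: sum_distrib_left) (rule sum.swap)
  then show "(\<Sum>j\<in>UNIV. (A ** B) $ i $ j) = 1" for i
    using assms unfolding row_stochastic_def by simp
qed

lemma row_stochastic_matpow: "row_stochastic P \<Longrightarrow> row_stochastic (matpow P k)"
proof (induction k)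
  case 0
  show ?case by (simp add: row_stochastic_def mat_def if_distrib cong: if_cong)
qed (simp add: row_stochastic_mult)

lemma stationary_mult:
  assumes "stationary A mu" "stationary B mu"
  shows "stationary (A ** B) mu"
proof -
  have "(\<Sum>x\<in>UNIV. mu x * (A ** B) $ x $ y) = (\<Sum>j\<in>UNIV. (\<Sum>x\<in>UNIV. mu x * A $ x $ j) * B $ j $ y)"
    for y unfolding matrix_matrix_mult_def
    by (simp add: sum_distrib_left sum_distrib_right mult.assoc) (rule sum.swap)
  then show ?thesis using assms unfolding stationary_def by simp
qed

lemma stationary_matpow: "stationary P mu \<Longrightarrow> stationary (matpow P k) mu"
proof (induction k)
  case 0
  then show ?case by (simp add: stationary_def mat_def if_distrib cong: if_cong)
qed (simp add: stationary_mult)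

lemma kernel_apply_mult: "kernel_apply (A ** B) f = kernel_apply A (kernel_apply B f)"
proof
  fix x
  have "kernel_apply (A ** B) f x = (\<Sum>y\<in>UNIV. \<Sum>k\<in>UNIV. A $ x $ k * (B $ k $ y * f y))"
    unfolding kernel_apply_def matrix_matrix_mult_def by (simp add: sum_distrib_right mult.assoc)
  also have "\<dots> = (\<Sum>k\<in>UNIV. \<Sum>y\<in>UNIV. A $ x $ k * (B $ k $ y * f y))" by (rule sum.swap)
  finally show "kernel_apply (A ** B) f x = kernel_apply A (kernel_apply B f) x"
    unfolding kernel_apply_def by (simp add: sum_distrib_left)
qed

lemma stationary_mean_kernel_apply:
  assumes "stationary Q mu"
  shows "(\<Sum>x\<in>UNIV. mu x * kernel_apply Q f x) = (\<Sum>y\<in>UNIV. mu y * f y)"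
proof -
  have "(\<Sum>x\<in>UNIV. mu x * kernel_apply Q f x) = (\<Sum>y\<in>UNIV. (\<Sum>x\<in>UNIV. mu x * Q $ x $ y) * f y)"
    unfolding kernel_apply_def
    by (simp add: sum_distrib_left sum_distrib_right mult.assoc) (rule sum.swap)
  then show ?thesis using assms unfolding stationary_def by simp
qed

lemma kernel_apply_square_le:
  assumes "row_stochastic Q"
  shows "(kernel_apply Q f x)\<^sup>2 \<le> (\<Sum>y\<in>UNIV. Q $ x $ y * (f y)\<^sup>2)"
proof -
  define m where "m = kernel_apply Q f x"
  have "0 \<le> (\<Sum>y\<in>UNIV. Q $ x $ y * (f y - m)\<^sup>2)"
    using assms unfolding row_stochastic_def by (intro sum_nonneg) auto
  also have "\<dots> = (\<Sum>y\<in>UNIV. Q $ x $ y * (f y)\<^sup>2) - 2 * m * (\<Sum>y\<in>UNIV. Q $ x $ y * f y)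
      + m\<^sup>2 * (\<Sum>y\<in>UNIV. Q $ x $ y)"
    by (simp add: power2_eq_square algebra_simps sum.distrib sum_subtractf sum_distrib_left)
  also have "\<dots> = (\<Sum>y\<in>UNIV. Q $ x $ y * (f y)\<^sup>2) - m\<^sup>2"
    using assms unfolding m_def kernel_apply_def row_stochastic_def by (simp add: power2_eq_square)
  finally show ?thesis unfolding m_def by simp
qed

lemma weighted_sqnorm_kernel_apply_le:
  assumes "row_stochastic Q" "stationary Q mu"
  shows "weighted_sqnorm mu (kernel_apply Q f) \<le> weighted_sqnorm mu f"
proof -
  have "weighted_sqnorm mu (kernel_apply Q f) \<le> (\<Sum>x\<in>UNIV. mu x * (\<Sum>y\<in>UNIV. Q $ x $ y * (f y)\<^sup>2))"
    unfolding weighted_sqnorm_def using assms(2) kernel_apply_square_le[OF assms(1)]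
    by (intro sum_mono mult_left_mono) (auto simp: stationary_def)
  also have "\<dots> = (\<Sum>y\<in>UNIV. (\<Sum>x\<in>UNIV. mu x * Q $ x $ y) * (f y)\<^sup>2)"
    by (simp add: sum_distrib_left sum_distrib_right mult.assoc) (rule sum.swap)
  also have "\<dots> = weighted_sqnorm mu f"
    using assms(2) unfolding weighted_sqnorm_def stationary_def by simp
  finally show ?thesis .
qed

lemma centered_contraction_one:
  "row_stochastic Q \<Longrightarrow> stationary Q mu \<Longrightarrow> centered_contraction mu Q 1"
  unfolding centered_contraction_def using weighted_sqnorm_kernel_apply_le by auto

lemma centered_contraction_mult:
  assumes "stationary B mu" "centered_contraction mu A c1" "centered_contraction mu B c2" "c1 \<ge> 0"
  shows "centered_contraction mu (A ** B) (c1 * c2)"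
  unfolding centered_contraction_def
proof (intro allI impI)
  fix f assume f0: "(\<Sum>x\<in>UNIV. mu x * f x) = 0"
  have "weighted_sqnorm mu (kernel_apply (A ** B) f) \<le> c1 * weighted_sqnorm mu (kernel_apply B f)"
    using assms(2) stationary_mean_kernel_apply[OF assms(1), of f] f0
    unfolding centered_contraction_def kernel_apply_mult by simp
  also have "\<dots> \<le> c1 * (c2 * weighted_sqnorm mu f)"
    using assms(3,4) f0 unfolding centered_contraction_def by (simp add: mult_left_mono)
  finally show "weighted_sqnorm mu (kernel_apply (A ** B) f) \<le> c1 * c2 * weighted_sqnorm mu f"
    by simp
qed

text \<open>The matrix of Q* Q in the coordinates g = sqrt(mu) f, which identify L2(mu) isometrically
  with Euclidean space.\<close>

definition sym_kernel :: "('n::finite \<Rightarrow> real) \<Rightarrow> real^'n^'n \<Rightarrow> real^'n^'n" where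
  "sym_kernel mu Q = (\<chi> x z. (\<Sum>x'\<in>UNIV. mu x' * Q $ x' $ x * Q $ x' $ z) / (sqrt (mu x) * sqrt (mu z)))"

lemma sym_kernel_similar_time_rev_mult:
  assumes "\<And>x. mu x > 0"
  shows "sym_kernel mu Q =
    diag_matrix (\<lambda>x. sqrt (mu x)) ** (time_rev mu Q ** Q) ** diag_matrix (\<lambda>x. 1 / sqrt (mu x))"
proof -
  define K where "K x z = (\<Sum>x'\<in>UNIV. mu x' * Q $ x' $ x * Q $ x' $ z)" for x z
  have "(time_rev mu Q ** Q) $ x $ z = K x z / mu x" for x z
    unfolding K_def time_rev_def matrix_matrix_mult_def by (simp add: sum_divide_distrib)
  moreover have "sqrt (mu x) * (K x z / mu x) * (1 / sqrt (mu z)) = K x z / (sqrt (mu x) * sqrt (mu z))"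
    for x z using assms[of x] assms[of z] real_sqrt_mult_self[of "mu x"] by (simp add: field_simps)
  ultimately show ?thesis
    unfolding sym_kernel_def K_def[symmetric]
    by (simp add: vec_eq_iff diag_matrix_mult_left diag_matrix_mult_right)
qed

lemma sym_kernel_symmetric: "transpose (sym_kernel mu Q) = sym_kernel mu Q"
  unfolding sym_kernel_def by (simp add: vec_eq_iff transpose_def mult_ac)

lemma sym_kernel_quadratic_form:
  fixes f :: "'n::finite \<Rightarrow> real"
  assumes "\<And>x. mu x > 0"
  defines "g \<equiv> \<chi> x. sqrt (mu x) * f x"
  shows "g \<bullet> (sym_kernel mu Q *v g) = weighted_sqnorm mu (kernel_apply Q f)"
proof -
  define K where "K x z = (\<Sum>x'\<in>UNIV. mu x' * Q $ x' $ x * Q $ x' $ z)" for x z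
  have cancel: "sqrt (mu x) * f x * (K x z / (sqrt (mu x) * sqrt (mu z)) * (sqrt (mu z) * f z))
      = f x * K x z * f z" for x z
    using assms(1)[of x] assms(1)[of z] by (simp add: field_simps)
  have "g \<bullet> (sym_kernel mu Q *v g) = (\<Sum>x\<in>UNIV. \<Sum>z\<in>UNIV. f x * K x z * f z)"
    unfolding g_def sym_kernel_def inner_vec_def matrix_vector_mult_def K_def[symmetric]
    by (simp only: vec_lambda_beta inner_real_def sum_distrib_left cancel)
  also have "\<dots> = (\<Sum>x\<in>UNIV. \<Sum>z\<in>UNIV. \<Sum>x'\<in>UNIV. mu x' * (Q $ x' $ x * f x) * (Q $ x' $ z * f z))"
    unfolding K_def by (simp add: sum_distrib_left sum_distrib_right mult_ac)
  also have "\<dots> = (\<Sum>x\<in>UNIV. \<Sum>x'\<in>UNIV. \<Sum>z\<in>UNIV. mu x' * (Q $ x' $ x * f x) * (Q $ x' $ z * f z))"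
    by (intro sum.cong refl sum.swap)
  also have "\<dots> = (\<Sum>x'\<in>UNIV. \<Sum>x\<in>UNIV. \<Sum>z\<in>UNIV. mu x' * (Q $ x' $ x * f x) * (Q $ x' $ z * f z))"
    by (rule sum.swap)
  also have "\<dots> = weighted_sqnorm mu (kernel_apply Q f)"
    unfolding weighted_sqnorm_def kernel_apply_def
    by (simp add: power2_eq_square sum_distrib_left sum_distrib_right mult_ac)
  finally show ?thesis .
qed

lemma sym_kernel_fixes_sqrt:
  assumes "row_stochastic Q" "stationary Q mu" "\<And>x. mu x > 0"
  shows "sym_kernel mu Q *v (\<chi> x. sqrt (mu x)) = (\<chi> x. sqrt (mu x))"
proof -
  have "(\<Sum>z\<in>UNIV. \<Sum>x'\<in>UNIV. mu x' * Q $ x' $ x * Q $ x' $ z) = mu x" for x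
  proof -
    have "(\<Sum>z\<in>UNIV. \<Sum>x'\<in>UNIV. mu x' * Q $ x' $ x * Q $ x' $ z)
        = (\<Sum>x'\<in>UNIV. mu x' * Q $ x' $ x * (\<Sum>z\<in>UNIV. Q $ x' $ z))"
      by (subst sum.swap) (simp add: sum_distrib_left)
    then show ?thesis using assms(1,2) unfolding row_stochastic_def stationary_def by simp
  qed
  moreover have "K / (sqrt (mu x) * sqrt (mu z)) * sqrt (mu z) = K / sqrt (mu x)" for K x z
    using assms(3)[of z] by simp
  moreover have "mu x / sqrt (mu x) = sqrt (mu x)" for x
    using assms(3)[of x] by (simp add: real_div_sqrt less_imp_le)
  ultimately show ?thesis
    unfolding sym_kernel_def matrix_vector_mult_def by (simp add: vec_eq_iff sum_divide_distrib[symmetric])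
qed

lemma lambda2_time_rev_mult_le_iff:
  assumes "row_stochastic Q" "stationary Q mu" "\<And>x. mu x > 0"
  shows "lambda2 (time_rev mu Q ** Q) \<le> c \<longleftrightarrow> 0 \<le> c \<and> centered_contraction mu Q c"
proof -
  define S where "S = sym_kernel mu Q"
  define e :: "real^'a" where "e = (\<chi> x. sqrt (mu x))"
  define coord :: "('a \<Rightarrow> real) \<Rightarrow> real^'a" where "coord f = (\<chi> x. sqrt (mu x) * f x)" for f
  have "charpoly S = charpoly (time_rev mu Q ** Q)"
    unfolding S_def sym_kernel_similar_time_rev_mult[OF assms(3)]
    by (rule charpoly_similar, rule diag_matrix_mult_inverse)
      (use assms(3) in \<open>simp add: less_imp_neq[symmetric]\<close>)
  then have lam: "lambda2 (time_rev mu Q ** Q) = lambda2 S"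
    unfolding lambda2_def eigs_desc_def by simp
  have quad: "coord f \<bullet> (S *v coord f) = weighted_sqnorm mu (kernel_apply Q f)" for f
    unfolding S_def coord_def by (rule sym_kernel_quadratic_form[OF assms(3)])
  have norm: "coord f \<bullet> coord f = weighted_sqnorm mu f" for f
    unfolding coord_def weighted_sqnorm_def inner_vec_def using assms(3)
    by (simp add: power2_eq_square mult_ac less_imp_le)
  have mean: "coord f \<bullet> e = (\<Sum>x\<in>UNIV. mu x * f x)" for f
    unfolding coord_def e_def inner_vec_def using assms(3)
    by (simp add: mult_ac less_imp_le real_sqrt_mult_self)
  have onto: "\<exists>f. g = coord f" for g
  proof
    show "g = coord (\<lambda>x. g $ x / sqrt (mu x))"
      unfolding coord_def using assms(3) by (simp add: vec_eq_iff less_imp_neq[symmetric])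
  qed
  have "lambda2 S \<le> c \<longleftrightarrow> 0 \<le> c \<and> (\<forall>g. g \<bullet> e = 0 \<longrightarrow> g \<bullet> (S *v g) \<le> c * (g \<bullet> g))"
  proof (rule lambda2_le_iff_rayleigh)
    show "transpose S = S" unfolding S_def by (rule sym_kernel_symmetric)
    show "norm e = 1"
      using norm[of "\<lambda>_. 1"] assms(2) unfolding norm_eq_sqrt_inner coord_def e_def
        weighted_sqnorm_def stationary_def by simp
    show "S *v e = e" unfolding S_def e_def by (rule sym_kernel_fixes_sqrt[OF assms])
    show "0 \<le> g \<bullet> (S *v g)" for g
      using onto[of g] quad assms(3) unfolding weighted_sqnorm_def
      by (auto intro!: sum_nonneg simp: less_imp_le)
    show "g \<bullet> (S *v g) \<le> g \<bullet> g" for g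
      using onto[of g] quad norm weighted_sqnorm_kernel_apply_le[OF assms(1,2)] by auto
  qed
  also have "(\<forall>g. g \<bullet> e = 0 \<longrightarrow> g \<bullet> (S *v g) \<le> c * (g \<bullet> g)) \<longleftrightarrow>
      (\<forall>f. coord f \<bullet> e = 0 \<longrightarrow> coord f \<bullet> (S *v coord f) \<le> c * (coord f \<bullet> coord f))"
    using onto by metis
  also have "\<dots> \<longleftrightarrow> centered_contraction mu Q c"
    unfolding centered_contraction_def quad norm mean ..
  finally show ?thesis unfolding lam .
qed

lemma gamma_dag_bounds:
  assumes "row_stochastic Q" "stationary Q mu" "\<And>x. mu x > 0"
  shows "0 \<le> gamma_dag mu Q" "gamma_dag mu Q \<le> 1"
    "centered_contraction mu Q (1 - gamma_dag mu Q)"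
  using lambda2_time_rev_mult_le_iff[OF assms] centered_contraction_one[OF assms(1,2)]
  unfolding gamma_dag_def by auto

lemma gamma_dag_ge_of_centered_contraction:
  assumes "row_stochastic Q" "stationary Q mu" "\<And>x. mu x > 0"
    and "0 \<le> c" "centered_contraction mu Q c"
  shows "1 - c \<le> gamma_dag mu Q"
  using lambda2_time_rev_mult_le_iff[OF assms(1-3)] assms(4,5) unfolding gamma_dag_def by auto

section \<open>Powers of the chain\<close>

lemma one_minus_power_le_bonferroni:
  fixes a :: real
  assumes "0 \<le> a" "a \<le> 1"
  shows "(1 - a) ^ m \<le> 1 - real m * a + (real m * (real m - 1) / 2) * a\<^sup>2"
proof (induction m)
  case (Suc m)
  have "(1 - a) ^ Suc m \<le> (1 - a) * (1 - real m * a + (real m * (real m - 1) / 2) * a\<^sup>2)"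
    using Suc assms by (simp add: mult_left_mono)
  also have "\<dots> = 1 - real (Suc m) * a + (real (Suc m) * (real (Suc m) - 1) / 2) * a\<^sup>2
      - (real m * (real m - 1) / 2) * a ^ 3"
    by (simp add: algebra_simps power2_eq_square power3_eq_cube field_simps)
  also have "\<dots> \<le> 1 - real (Suc m) * a + (real (Suc m) * (real (Suc m) - 1) / 2) * a\<^sup>2"
    using assms by (cases m) auto
  finally show ?case .
qed simp

lemma one_minus_power_ge:
  fixes a :: real
  assumes "0 \<le> a" "a \<le> 1" "m \<ge> 1" "real m * a \<le> 1"
  shows "(real m + 1) * a / 2 \<le> 1 - (1 - a) ^ m"
proof -
  have "real m * a - (real m * (real m - 1) / 2) * a\<^sup>2 - (real m + 1) * a / 2
      = a * (real m - 1) * (1 - real m * a) / 2"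
    by (simp add: field_simps power2_eq_square)
  also have "\<dots> \<ge> 0" using assms by simp
  finally show ?thesis using one_minus_power_le_bonferroni[OF assms(1,2), of m] by linarith
qed

lemma matpow_add: "matpow A (m + n) = matpow A m ** matpow A n"
  by (induction m) (simp_all add: matrix_mul_assoc)

lemma matpow_mult: "matpow A (m * n) = matpow (matpow A m) n"
  by (induction n) (simp_all add: matpow_add)

locale positive_stationary_chain =
  fixes P :: "real^'n::finite^'n" and mu :: "'n \<Rightarrow> real"
  assumes row_stochastic: "row_stochastic P"
    and stationary: "stationary P mu"
    and positive: "\<And>x. mu x > 0"
begin

lemmas matpow_assms =
  row_stochastic_matpow[OF row_stochastic] stationary_matpow[OF stationary] positive

lemma matpow_chain: "positive_stationary_chain (matpow P k) mu"
  using matpow_assms by unfold_locales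

lemma gamma_dag_matpow_bounds: "0 \<le> gamma_dag mu (matpow P k)" "gamma_dag mu (matpow P k) \<le> 1"
  using gamma_dag_bounds[OF matpow_assms] by auto

lemma centered_contraction_matpow_mult:
  assumes "centered_contraction mu (matpow P k) s" "0 \<le> s"
  shows "centered_contraction mu (matpow P (k * m)) (s ^ m)"
proof (induction m)
  case 0
  show ?case using centered_contraction_one[OF matpow_assms(1,2), of 0] by simp
next
  case (Suc m)
  then show ?case
    using centered_contraction_mult[OF matpow_assms(2) assms(1) Suc assms(2)]
    by (simp add: matpow_add[symmetric])
qed

lemma gamma_dag_matpow_ge:
  assumes "k \<ge> 1"
  shows "1 - (1 - gamma_dag mu (matpow P k)) ^ (n div k) \<le> gamma_dag mu (matpow P n)"
proof -
  define s where "s = 1 - gamma_dag mu (matpow P k)"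
  have s: "0 \<le> s" "centered_contraction mu (matpow P k) s"
    using gamma_dag_bounds[OF matpow_assms] unfolding s_def by auto
  have "centered_contraction mu (matpow P (k * (n div k)) ** matpow P (n mod k)) (s ^ (n div k) * 1)"
    using centered_contraction_mult[OF matpow_assms(2) centered_contraction_matpow_mult[OF s(2,1)]
        centered_contraction_one[OF matpow_assms(1,2)]] s(1)
    by simp
  then have "centered_contraction mu (matpow P n) (s ^ (n div k))"
    by (simp add: matpow_add[symmetric])
  then show ?thesis
    using s(1) by (intro gamma_dag_ge_of_centered_contraction[OF matpow_assms]) (simp_all add: s_def)
qed

lemma gamma_dag_div_le_gamma_ps:
  assumes "k \<ge> 1"
  shows "gamma_dag mu (matpow P k) / real k \<le> gamma_ps mu P"
proof -
  have "bdd_above ((\<lambda>k. gamma_dag mu (matpow P k) / real k) ` {1..})"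
  proof (rule bdd_aboveI2[where M = 1])
    fix k :: nat assume "k \<in> {1..}"
    then show "gamma_dag mu (matpow P k) / real k \<le> 1"
      using gamma_dag_matpow_bounds(2)[of k] by (simp add: divide_le_eq)
  qed
  then show ?thesis unfolding gamma_ps_def using assms by (intro cSUP_upper) auto
qed

lemma gamma_ps_nonneg: "0 \<le> gamma_ps mu P"
  using gamma_dag_div_le_gamma_ps[of 1] gamma_dag_matpow_bounds(1)[of 1] by simp

lemma gamma_ps_matpow_ge_of_less:
  assumes "p < k" "p \<ge> 1"
  shows "real p * gamma_dag mu (matpow P k) / (2 * real k) \<le> gamma_ps mu (matpow P p)"
proof -
  define a where "a = gamma_dag mu (matpow P k)"
  have a: "0 \<le> a" "a \<le> 1" unfolding a_def by (rule gamma_dag_matpow_bounds)+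
  define j where "j = k div p + 1"
  have "p * (k div p) \<le> k" "k < p * (k div p) + p"
    using assms(2) mult_div_mod_eq[of p k] mod_less_divisor[of p k] by linarith+
  then have j: "j \<ge> 1" "k \<le> p * j" "p * j \<le> 2 * k"
    using assms(1) unfolding j_def distrib_left by linarith+
  have "a = 1 - (1 - a) ^ 1" by simp
  also have "\<dots> \<le> 1 - (1 - a) ^ (p * j div k)"
    using j(2) assms a by (intro diff_left_mono power_decreasing) (auto simp: Suc_le_eq div_greater_zero_iff)
  also have "\<dots> \<le> gamma_dag mu (matpow P (p * j))"
    unfolding a_def using assms by (intro gamma_dag_matpow_ge) simp
  finally have "a / real j \<le> gamma_ps mu (matpow P p)"
    using positive_stationary_chain.gamma_dag_div_le_gamma_ps[OF matpow_chain j(1)] j(1)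
    by (simp add: matpow_mult) (meson divide_right_mono of_nat_0_le_iff order_trans)
  moreover have "real p * a / (2 * real k) \<le> a / real j"
  proof -
    have "real (p * j) \<le> real (2 * k)" using j(3) by (simp only: of_nat_le_iff)
    then have "real p * a * real j \<le> a * (2 * real k)"
      using a(1) by (simp add: mult_left_mono mult_ac)
    then show ?thesis using j(1) assms by (simp add: field_simps)
  qed
  ultimately show ?thesis unfolding a_def by linarith
qed

lemma gamma_ps_matpow_ge_of_ge:
  assumes "k \<le> p" "k \<ge> 1" and small: "real p * (gamma_dag mu (matpow P k) / real k) \<le> 1"
  shows "real p * gamma_dag mu (matpow P k) / (2 * real k) \<le> gamma_ps mu (matpow P p)"
proof -
  define a where "a = gamma_dag mu (matpow P k)"
  have a: "0 \<le> a" "a \<le> 1" unfolding a_def by (rule gamma_dag_matpow_bounds)+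
  define m where "m = p div k"
  have "k * m \<le> p" "p < k * m + k"
    using assms(2) mult_div_mod_eq[of k p] mod_less_divisor[of k p] unfolding m_def by linarith+
  moreover have "m \<ge> 1" using assms(1,2) unfolding m_def by (simp add: Suc_le_eq div_greater_zero_iff)
  ultimately have m: "m \<ge> 1" "k * m \<le> p" "p \<le> k * (m + 1)" by simp_all
  have "real m * a = real (k * m) * (a / real k)" using assms(2) by simp
  also have "\<dots> \<le> real p * (a / real k)"
    using m(2) a by (intro mult_right_mono) (simp_all only: of_nat_le_iff, simp)
  finally have "(real m + 1) * a / 2 \<le> 1 - (1 - a) ^ (p div k)"
    using one_minus_power_ge[OF a m(1)] small unfolding m_def a_def by simp
  also have "\<dots> \<le> gamma_dag mu (matpow P p)"
    unfolding a_def using assms(2) by (rule gamma_dag_matpow_ge)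
  also have "\<dots> \<le> gamma_ps mu (matpow P p)"
    using positive_stationary_chain.gamma_dag_div_le_gamma_ps[OF matpow_chain, of 1] by simp
  finally have "(real m + 1) * a / 2 \<le> gamma_ps mu (matpow P p)" .
  moreover have "real p * a / (2 * real k) \<le> (real m + 1) * a / 2"
  proof -
    have "real p \<le> real k * (real m + 1)"
      using m(3) by (metis of_nat_1 of_nat_add of_nat_le_iff of_nat_mult)
    then have "real p * a \<le> real k * (real m + 1) * a" using a(1) by (rule mult_right_mono)
    then show ?thesis using assms(2) by (simp add: field_simps)
  qed
  ultimately show ?thesis unfolding a_def by linarith
qed

lemma gamma_ps_matpow_gt:
  assumes p: "p \<ge> 1" and small: "real p < 1 / gamma_ps mu P"
  shows "real p * gamma_ps mu P / 4 < gamma_ps mu (matpow P p)"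
proof -
  define \<gamma> where "\<gamma> = gamma_ps mu P"
  have "\<gamma> \<noteq> 0" using small unfolding \<gamma>_def by auto
  then have "\<gamma> > 0" using gamma_ps_nonneg unfolding \<gamma>_def by simp
  have bdd: "bdd_above ((\<lambda>k. gamma_dag mu (matpow P k) / real k) ` {1..})"
    using gamma_dag_div_le_gamma_ps by (intro bdd_aboveI2) auto
  have "\<gamma> / 2 < \<gamma>" using \<open>\<gamma> > 0\<close> by simp
  then have "\<exists>k\<in>{1..}. \<gamma> / 2 < gamma_dag mu (matpow P k) / real k"
    using less_cSUP_iff[OF _ bdd, of "\<gamma> / 2"] unfolding \<gamma>_def gamma_ps_def by blast
  then obtain k where k: "k \<ge> 1" "\<gamma> / 2 < gamma_dag mu (matpow P k) / real k" by auto
  have "real p * (gamma_dag mu (matpow P k) / real k) \<le> real p * \<gamma>"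
    using gamma_dag_div_le_gamma_ps[OF k(1)] unfolding \<gamma>_def by (intro mult_left_mono) simp_all
  also have "\<dots> < 1" using small \<open>\<gamma> > 0\<close> unfolding \<gamma>_def by (simp add: field_simps)
  finally have "real p * gamma_dag mu (matpow P k) / (2 * real k) \<le> gamma_ps mu (matpow P p)"
    using gamma_ps_matpow_ge_of_less[OF _ p] gamma_ps_matpow_ge_of_ge[OF _ k(1)]
    by (cases "p < k") (simp_all add: not_less)
  moreover have "real p * \<gamma> / 4 < real p * gamma_dag mu (matpow P k) / (2 * real k)"
    using k p by (simp add: field_simps)
  ultimately show ?thesis unfolding \<gamma>_def by linarith
qed

end

lemma stationary_primitive_positive:
  assumes "row_stochastic P" "primitive P" "stationary P mu"
  shows "mu y > 0"
proof -
  obtain k where pos: "\<And>i j. matpow P k $ i $ j > 0"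
    using assms(2) unfolding primitive_def by blast
  have mu: "\<And>x. mu x \<ge> 0" "(\<Sum>x\<in>UNIV. mu x) = 1" using assms(3) unfolding stationary_def by auto
  obtain x where "mu x > 0"
  proof (rule ccontr)
    assume "\<not> thesis"
    then have "(\<Sum>x\<in>UNIV. mu x) \<le> 0" using that by (intro sum_nonpos) (meson not_le)
    then show False using mu(2) by simp
  qed
  have "mu x * matpow P k $ x $ y \<le> (\<Sum>x\<in>UNIV. mu x * matpow P k $ x $ y)"
    using mu(1) row_stochastic_matpow[OF assms(1)] unfolding row_stochastic_def
    by (intro member_le_sum) auto
  also have "\<dots> = mu y" using stationary_matpow[OF assms(3)] unfolding stationary_def by simp
  finally show ?thesis using \<open>mu x > 0\<close> pos[of x y] by (meson less_le_trans mult_pos_pos)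
qed

lemma four_le_log_pi_star:
  assumes "stationary P mu" "\<And>x. mu x > 0"
  shows "4 \<le> 2 * ln (4 * exp 1 / pi_star mu) + 2"
proof -
  have "pi_star mu \<in> range mu" unfolding pi_star_def by (rule Min_in) auto
  then obtain x where x: "pi_star mu = mu x" by auto
  have "mu x \<le> (\<Sum>x\<in>UNIV. mu x)" using assms(2) by (intro member_le_sum) (auto simp: less_imp_le)
  then have "mu x \<le> 1" using assms(1) unfolding stationary_def by simp
  then have "exp 1 \<le> 4 * exp 1 / mu x" using assms(2)[of x] by (simp add: field_simps)
  then have "ln (exp 1) \<le> ln (4 * exp 1 / mu x)" using assms(2)[of x] by (subst ln_le_cancel_iff) auto
  then show ?thesis unfolding x by simp
qed

theorem mainTheorem7:
  fixes P :: "real ^ 'n::finite ^ 'n" and mu :: "'n \<Rightarrow> real" and p :: nat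
  assumes "row_stochastic P"
    and "primitive P"
    and "stationary P mu"
    and "p \<ge> 1"
    and "real p < 1 / gamma_ps mu P"
  shows "gamma_ps mu (matpow P p) >
           real p * gamma_ps mu P / (2 * ln (4 * exp 1 / pi_star mu) + 2)"
proof -
  have pos: "\<And>x. mu x > 0" using stationary_primitive_positive[OF assms(1-3)] .
  interpret positive_stationary_chain P mu using assms(1,3) pos by unfold_locales
  have "real p * gamma_ps mu P / (2 * ln (4 * exp 1 / pi_star mu) + 2) \<le> real p * gamma_ps mu P / 4"
    using four_le_log_pi_star[OF assms(3) pos] gamma_ps_nonneg by (intro divide_left_mono) auto
  then show ?thesis using gamma_ps_matpow_gt[OF assms(4,5)] by linarith
qed

end
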